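(* Let $H$ be a graph on $[n]$ and assume that ${\bf d}$ is a degree sequence satisfying $J({\bf d})=o(M-2e(H))$. Then \[ {\mathbb P}(H\subseteq {\mathcal G}(n,{\bf d})) \le \prod_{i=1}^n (d_i)_{d_i^{H}} \prod_{i=1}^{e(H)}\frac{1+o(1)}{M-2i+2}. \] If further we have $\Delta^2_{\partial(H)}=o(M-2e(H))$, then \[ {\mathbb P}(H\subseteq {\mathcal G}(n,{\bf d})) = \prod_{i=1}^n (d_i)_{d_i^{H}} \prod_{i=1}^{e(H)}\frac{1+o(1)}{M-2i+2}, \] i.e.\ the upper bound holds with equality (up to the $1+o(1)$ factors).
   Context: ${\bf d}=(d_1,\ldots,d_n)$ is a graphical degree sequence with $d_1\ge d_2\ge\cdots\ge d_n$, and ${\mathcal G}(n,{\bf d})$ is a uniformly random graph on vertex set $[n]$ in which vertex $i$ has degree $d_i$. $\Delta=d_1$, $M=\sum_{i=1}^n d_i$, $J({\bf d})=\sum_{i=1}^{\Delta} d_i$. For a graph $H$ on $[n]$, $e(H)$ is its number of edges, ${\bf d}^H=(d^H_1,\ldots,d^H_n)$ is its degree sequence, and $\partial(H)$ is the set of vertices incident to some edge of $H$. For $S\subseteq[n]$, $\Delta_S=\max_{i\in S} d_i$. $(x)_k$ denotes the falling factorial $x(x-1)\cdots(x-k+1)$. Asymptotics are as $n\to\infty$. *)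

theory Defs
  imports Complex_Main "HOL-Library.Landau_Symbols"
begin

definition simple_graph :: "nat \<Rightarrow> nat set set \<Rightarrow> bool" where
  "simple_graph n E \<longleftrightarrow> E \<subseteq> {e. \<exists>u v. u \<noteq> v \<and> u \<in> {1..n} \<and> v \<in> {1..n} \<and> e = {u, v}}"

definition deg :: "nat set set \<Rightarrow> nat \<Rightarrow> nat" where
  "deg E v = card {e \<in> E. v \<in> e}"

text \<open>The support of the uniform random graph G(n,d): all simple graphs on [n]
  in which vertex i has degree d i.\<close>
definition graphs_deg :: "nat \<Rightarrow> (nat \<Rightarrow> nat) \<Rightarrow> nat set set set" where
  "graphs_deg n d = {E. simple_graph n E \<and> (\<forall>i\<in>{1..n}. deg E i = d i)}"

definition graphical :: "nat \<Rightarrow> (nat \<Rightarrow> nat) \<Rightarrow> bool" where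
  "graphical n d \<longleftrightarrow> graphs_deg n d \<noteq> {}"

definition prob_contains :: "nat \<Rightarrow> (nat \<Rightarrow> nat) \<Rightarrow> nat set set \<Rightarrow> real" where
  "prob_contains n d H =
     real (card {G \<in> graphs_deg n d. H \<subseteq> G}) / real (card (graphs_deg n d))"

definition nonincreasing_on :: "nat \<Rightarrow> (nat \<Rightarrow> nat) \<Rightarrow> bool" where
  "nonincreasing_on n d \<longleftrightarrow> (\<forall>i j. 1 \<le> i \<longrightarrow> i \<le> j \<longrightarrow> j \<le> n \<longrightarrow> d j \<le> d i)"

definition Mtot :: "nat \<Rightarrow> (nat \<Rightarrow> nat) \<Rightarrow> nat" where
  "Mtot n d = (\<Sum>i=1..n. d i)"

text \<open>Delta = d_1 (the sequence is assumed sorted nonincreasingly).\<close>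
definition Jd :: "nat \<Rightarrow> (nat \<Rightarrow> nat) \<Rightarrow> nat" where
  "Jd n d = (\<Sum>i=1..d 1. d i)"

definition Delta_set :: "(nat \<Rightarrow> nat) \<Rightarrow> nat set \<Rightarrow> nat" where
  "Delta_set d S = Max (insert 0 (d ` S))"

definition boundary :: "nat set set \<Rightarrow> nat set" where
  "boundary H = \<Union>H"

definition ffall :: "real \<Rightarrow> nat \<Rightarrow> real" where
  "ffall x k = (\<Prod>j<k. x - real j)"

end

theory Submission
  imports Defs
begin

text \<open>
  Write N(K) for the number of graphs with degree sequence d containing the edge set K, so that
  P(H \<subseteq> G(n,d)) = N(H) / N({}); add the edges uv of H one at a time. The switching
  uv, xy \<mapsto> ux, vy, where x is not in the closed neighbourhood of u nor y in that of v
  (this excludes at most 4J arcs (x, y)), shows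
  N(K + uv) (M - 2|K| - 4J) \<le> N(K) (d_u - deg_K u) (d_v - deg_K v); the switching
  ux, vy, wz \<mapsto> uv, xw, yz shows the reverse inequality up to a factor
  1 + \<Delta>^2/W + 10J/(W - 10J), where W = M - 2e(H). Along the edges of H the factors
  d_u - deg_K u multiply up to \<Prod>i. (d_i)_(d_i^H), so P(H \<subseteq> G(n,d)) is squeezed between
  \<Prod>i. (d_i)_(d_i^H) / \<Prod>i. (M - 2i + 2) times (1 + 4J/(W - 4J))^e(H) and divided by
  (1 + \<Delta>^2/W + 10J/(W - 10J))^e(H). Under the hypotheses both corrections are 1 + o(1)
  per edge; for the equality the per-edge error is the e(H)-th root of the exact ratio.
\<close>

section \<open>Simple graphs and degrees\<close>

definition arcs :: "nat set set \<Rightarrow> (nat \<times> nat) set" where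
  "arcs E = {(x, y). {x, y} \<in> E}"

definition nbrs :: "nat set set \<Rightarrow> nat \<Rightarrow> nat set" where
  "nbrs E x = {y. {x, y} \<in> E}"

lemma simple_graph_edgeD:
  assumes "simple_graph n E" "{x, y} \<in> E"
  shows "x \<noteq> y" "x \<in> {1..n}" "y \<in> {1..n}"
  using assms unfolding simple_graph_def by (auto simp: doubleton_eq_iff)

lemma simple_graph_edgeE:
  assumes "simple_graph n E" "e \<in> E"
  obtains u v where "u \<noteq> v" "u \<in> {1..n}" "v \<in> {1..n}" "e = {u, v}"
  using assms unfolding simple_graph_def by blast

lemma simple_graph_subset: "simple_graph n E \<Longrightarrow> F \<subseteq> E \<Longrightarrow> simple_graph n F"
  unfolding simple_graph_def by blast

lemma simple_graph_empty: "simple_graph n {}"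
  unfolding simple_graph_def by blast

lemma simple_graph_insert:
  "simple_graph n E \<Longrightarrow> u \<noteq> v \<Longrightarrow> u \<in> {1..n} \<Longrightarrow> v \<in> {1..n} \<Longrightarrow> simple_graph n (insert {u, v} E)"
  unfolding simple_graph_def by blast

lemma simple_graph_finite: "simple_graph n E \<Longrightarrow> finite E"
  unfolding simple_graph_def by (rule finite_subset[of _ "Pow {1..n}"]) auto

lemma finite_graphs_deg: "finite (graphs_deg n d)"
  unfolding graphs_deg_def simple_graph_def
  by (rule finite_subset[of _ "Pow (Pow {1..n})"]) auto

lemma graphs_deg_simple: "G \<in> graphs_deg n d \<Longrightarrow> simple_graph n G"
  unfolding graphs_deg_def by auto

lemma graphs_deg_deg: "G \<in> graphs_deg n d \<Longrightarrow> i \<in> {1..n} \<Longrightarrow> deg G i = d i"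
  unfolding graphs_deg_def by auto

lemma nbrs_subset: "simple_graph n E \<Longrightarrow> nbrs E x \<subseteq> {1..n}"
  unfolding nbrs_def using simple_graph_edgeD by fastforce

lemma finite_nbrs: "simple_graph n E \<Longrightarrow> finite (nbrs E x)"
  by (rule finite_subset[OF nbrs_subset]) auto

lemma card_nbrs:
  assumes "simple_graph n E"
  shows "card (nbrs E x) = deg E x"
proof -
  have "bij_betw (\<lambda>y. {x, y}) (nbrs E x) {e \<in> E. x \<in> e}"
  proof (rule bij_betwI')
    fix a b assume "a \<in> nbrs E x" "b \<in> nbrs E x"
    then have "x \<noteq> a" "x \<noteq> b"
      using simple_graph_edgeD(1)[OF assms] unfolding nbrs_def by auto
    then show "({x, a} = {x, b}) = (a = b)" by (auto simp: doubleton_eq_iff)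
  next
    fix e assume e: "e \<in> {e \<in> E. x \<in> e}"
    then obtain u v where "e = {u, v}"
      using simple_graph_edgeE[OF assms] by blast
    with e show "\<exists>y\<in>nbrs E x. e = {x, y}"
      unfolding nbrs_def by (auto simp: insert_commute)
  qed (auto simp: nbrs_def)
  then show ?thesis unfolding deg_def by (rule bij_betw_same_card)
qed

lemma arcs_subset: "simple_graph n E \<Longrightarrow> arcs E \<subseteq> {1..n} \<times> {1..n}"
  unfolding arcs_def using simple_graph_edgeD by fastforce

lemma finite_arcs: "simple_graph n E \<Longrightarrow> finite (arcs E)"
  by (rule finite_subset[OF arcs_subset]) auto

lemma card_arcs_fst:
  assumes "simple_graph n E" "finite S"
  shows "card {t \<in> arcs E. fst t \<in> S} = (\<Sum>a\<in>S. deg E a)"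
proof -
  have "{t \<in> arcs E. fst t \<in> S} = Sigma S (nbrs E)"
    unfolding arcs_def nbrs_def by auto
  then show ?thesis using assms by (simp add: card_nbrs finite_nbrs)
qed

lemma card_arcs_snd:
  assumes "simple_graph n E" "finite S"
  shows "card {t \<in> arcs E. snd t \<in> S} = (\<Sum>a\<in>S. deg E a)"
proof -
  have "{t \<in> arcs E. snd t \<in> S} = prod.swap ` {t \<in> arcs E. fst t \<in> S}"
    unfolding arcs_def by (auto simp: image_iff insert_commute)
  then show ?thesis
    using card_arcs_fst[OF assms] by (simp add: card_image)
qed

lemma card_arcs:
  assumes "simple_graph n E"
  shows "card (arcs E) = 2 * card E"
proof -
  have arcs_edge: "{(x, y). {x, y} = e} = {(u, v), (v, u)}" if "u \<noteq> v" "e = {u, v}" for e u v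
    using that by (auto simp: doubleton_eq_iff)
  have "arcs E = (\<Union>e\<in>E. {(x, y). {x, y} = e})"
    unfolding arcs_def by auto
  also have "card \<dots> = (\<Sum>e\<in>E. card {(x, y). {x, y} = e})"
    using simple_graph_finite[OF assms]
    by (intro card_UN_disjoint) (auto elim!: simple_graph_edgeE[OF assms] simp: arcs_edge)
  also have "\<dots> = (\<Sum>e\<in>E. 2)"
    by (intro sum.cong) (auto elim!: simple_graph_edgeE[OF assms] simp: arcs_edge)
  finally show ?thesis by simp
qed

lemma sum_deg_eq_twice_card:
  assumes "simple_graph n E"
  shows "(\<Sum>i=1..n. deg E i) = 2 * card E"
proof -
  have "arcs E = {t \<in> arcs E. fst t \<in> {1..n}}"
    using arcs_subset[OF assms] by auto
  then show ?thesis
    using card_arcs_fst[OF assms, of "{1..n}"] card_arcs[OF assms] by simp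
qed

lemma Mtot_eq_twice_card: "G \<in> graphs_deg n d \<Longrightarrow> Mtot n d = 2 * card G"
  unfolding Mtot_def
  by (metis graphs_deg_deg graphs_deg_simple sum.cong sum_deg_eq_twice_card)

lemma deg_mono: "finite F \<Longrightarrow> E \<subseteq> F \<Longrightarrow> deg E i \<le> deg F i"
  unfolding deg_def by (rule card_mono) auto

lemma deg_Un_disjoint:
  "finite E \<Longrightarrow> finite F \<Longrightarrow> E \<inter> F = {} \<Longrightarrow> deg (E \<union> F) i = deg E i + deg F i"
  unfolding deg_def by (subst card_Un_disjoint[symmetric]) (auto intro: arg_cong[where f = card])

lemma deg_Diff:
  assumes "finite E" "F \<subseteq> E"
  shows "deg (E - F) i = deg E i - deg F i"
proof -
  have "{e \<in> E - F. i \<in> e} = {e \<in> E. i \<in> e} - {e \<in> F. i \<in> e}"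
    by auto
  then show ?thesis
    unfolding deg_def using assms by (simp add: card_Diff_subset finite_subset subset_iff)
qed

lemma deg_insert:
  assumes "finite E" "e \<notin> E"
  shows "deg (insert e E) i = deg E i + (if i \<in> e then 1 else 0)"
proof -
  have "{e' \<in> insert e E. i \<in> e'} = (if i \<in> e then insert e {e' \<in> E. i \<in> e'} else {e' \<in> E. i \<in> e'})"
    by auto
  then show ?thesis
    unfolding deg_def using assms by simp
qed

lemma deg_empty: "deg {} i = 0"
  unfolding deg_def by simp

lemma deg_insert_edge:
  assumes "finite E" "{a, b} \<notin> E" "a \<noteq> b"
  shows "deg (insert {a, b} E) i = deg E i + (if i = a then 1 else 0) + (if i = b then 1 else 0)"
  using deg_insert[OF assms(1,2)] assms(3) by auto

lemma switch_in_graphs_deg: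
  assumes G: "G \<in> graphs_deg n d" and "R \<subseteq> G" "A \<inter> G = {}" "simple_graph n A"
    and deg_eq: "\<And>i. deg R i = deg A i"
  shows "(G - R) \<union> A \<in> graphs_deg n d"
proof -
  have sG: "simple_graph n G" using graphs_deg_simple[OF G] .
  then have fin: "finite G" "finite A" "finite R"
    using assms simple_graph_finite finite_subset by blast+
  have "simple_graph n ((G - R) \<union> A)"
    using sG assms unfolding simple_graph_def by blast
  moreover have "deg ((G - R) \<union> A) i = deg G i" for i
    using deg_Un_disjoint[of "G - R" A i] deg_Diff[of G R i] deg_mono[of G R i] deg_eq[of i]
      fin assms by auto
  ultimately show ?thesis
    using G unfolding graphs_deg_def by simp
qed

lemma card_arcs_Diff:
  assumes G: "G \<in> graphs_deg n d" and "K \<subseteq> G"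
  shows "real (card (arcs (G - K))) = real (Mtot n d) - 2 * real (card K)"
proof -
  have sG: "simple_graph n G" using graphs_deg_simple[OF G] .
  then have "card (arcs (G - K)) = 2 * (card G - card K)"
    using card_arcs[OF simple_graph_subset[OF sG]] assms
    by (simp add: card_Diff_subset finite_subset simple_graph_finite)
  moreover have "card K \<le> card G"
    using card_mono[OF simple_graph_finite[OF sG] assms(2)] .
  ultimately show ?thesis
    using Mtot_eq_twice_card[OF G] by (simp add: of_nat_diff)
qed

lemma card_nbrs_Diff:
  assumes G: "G \<in> graphs_deg n d" and "K \<subseteq> G" "u \<in> {1..n}"
  shows "card (nbrs G u - nbrs K u) = d u - deg K u"
proof -
  have sG: "simple_graph n G" using graphs_deg_simple[OF G] .
  have sK: "simple_graph n K" using simple_graph_subset[OF sG assms(2)] .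
  have "nbrs K u \<subseteq> nbrs G u"
    using assms(2) unfolding nbrs_def by auto
  then show ?thesis
    using card_Diff_subset[OF finite_nbrs[OF sK]] card_nbrs[OF sG] card_nbrs[OF sK]
      graphs_deg_deg[OF G assms(3)] by simp
qed

section \<open>Nonincreasing degree sequences\<close>

lemma nonincreasing_sum_le_initial:
  assumes "nonincreasing_on n d"
  shows "S \<subseteq> {1..n} \<Longrightarrow> sum d S \<le> sum d {1..card S}"
proof (induction "card S" arbitrary: S)
  case 0
  then show ?case using finite_subset[OF 0(2)] by auto
next
  case (Suc k)
  have fin: "finite S" using finite_subset[OF Suc(3)] by simp
  define m where "m = Max S"
  have "S \<noteq> {}" using Suc(2) by auto
  then have m: "m \<in> S" "S \<subseteq> {1..m}"
    using fin Suc(3) Max_ge unfolding m_def by auto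
  have k: "k = card (S - {m})"
    using Suc(2) fin m(1) by simp
  have "sum d (S - {m}) \<le> sum d {1..k}"
    using Suc(1)[OF k] Suc(3) unfolding k by blast
  moreover have "Suc k \<le> m"
    using card_mono[OF _ m(2)] Suc(2) by simp
  then have "d m \<le> d (Suc k)"
    using assms m(1) Suc(3) unfolding nonincreasing_on_def by auto
  ultimately show ?case
    using sum.remove[OF fin m(1), of d] by (simp add: Suc(2)[symmetric])
qed

lemma nonincreasing_le_first: "nonincreasing_on n d \<Longrightarrow> i \<in> {1..n} \<Longrightarrow> d i \<le> d 1"
  unfolding nonincreasing_on_def by auto

lemma first_le_Jd: "d 1 \<le> Jd n d"
  unfolding Jd_def by (cases "d 1 = 0") (auto intro: member_le_sum)

lemma sum_le_Jd:
  assumes "nonincreasing_on n d" "S \<subseteq> {1..n}" "card S \<le> d 1"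
  shows "sum d S \<le> Jd n d"
proof -
  have "sum d S \<le> sum d {1..card S}"
    using nonincreasing_sum_le_initial assms(1,2) .
  also have "\<dots> \<le> sum d {1..d 1}"
    using assms(3) by (intro sum_mono2) auto
  finally show ?thesis unfolding Jd_def .
qed

lemma sum_nbrs_le_Jd:
  assumes sorted: "nonincreasing_on n d" and G: "G \<in> graphs_deg n d" and "x \<in> {1..n}"
  shows "sum d (nbrs G x) \<le> Jd n d"
  using sum_le_Jd[OF sorted nbrs_subset[OF graphs_deg_simple[OF G]]] nonincreasing_le_first[OF sorted]
    card_nbrs[OF graphs_deg_simple[OF G]] graphs_deg_deg[OF G] assms(3) by simp

lemma card_arcs_near_le:
  assumes sorted: "nonincreasing_on n d" and G: "G \<in> graphs_deg n d"
    and S: "S \<subseteq> {1..n}" and x: "x \<in> {1..n}"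
  shows "card {t \<in> arcs G. fst t \<in> S \<union> nbrs G x} \<le> (card S + 1) * Jd n d"
    and "card {t \<in> arcs G. snd t \<in> S \<union> nbrs G x} \<le> (card S + 1) * Jd n d"
proof -
  have sG: "simple_graph n G" using graphs_deg_simple[OF G] .
  have fin: "finite S" "finite (nbrs G x)"
    using finite_subset[OF S] finite_nbrs[OF sG] by auto
  have "(\<Sum>a\<in>S \<union> nbrs G x. deg G a) = sum d (S \<union> nbrs G x)"
    using graphs_deg_deg[OF G] S nbrs_subset[OF sG, of x] by (intro sum.cong) auto
  also have "\<dots> \<le> sum d S + sum d (nbrs G x)"
    using sum_Un_nat[OF fin, of d] by simp
  also have "sum d S \<le> card S * Jd n d"
  proof -
    have "d i \<le> Jd n d" if "i \<in> S" for i
      using that S nonincreasing_le_first[OF sorted] first_le_Jd[of d n] by (meson le_trans subsetD)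
    then show ?thesis
      using sum_bounded_above[of S d "Jd n d"] by simp
  qed
  finally have "(\<Sum>a\<in>S \<union> nbrs G x. deg G a) \<le> (card S + 1) * Jd n d"
    using sum_nbrs_le_Jd[OF sorted G x] by simp
  then show "card {t \<in> arcs G. fst t \<in> S \<union> nbrs G x} \<le> (card S + 1) * Jd n d"
    and "card {t \<in> arcs G. snd t \<in> S \<union> nbrs G x} \<le> (card S + 1) * Jd n d"
    using card_arcs_fst[OF sG, of "S \<union> nbrs G x"] card_arcs_snd[OF sG, of "S \<union> nbrs G x"] fin
    by simp_all
qed

lemma card_arcs_avoiding_ge:
  assumes sorted: "nonincreasing_on n d" and G: "G \<in> graphs_deg n d" and "K \<subseteq> G"
    and S: "S1 \<subseteq> {1..n}" "S2 \<subseteq> {1..n}" "card S1 \<le> m" "card S2 \<le> m"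
    and x: "x1 \<in> {1..n}" "x2 \<in> {1..n}"
  shows "real (Mtot n d) - 2 * real (card K) - 2 * (real m + 1) * real (Jd n d)
    \<le> card {t \<in> arcs (G - K). fst t \<notin> S1 \<union> nbrs G x1 \<and> snd t \<notin> S2 \<union> nbrs G x2}"
    (is "_ \<le> real (card ?Y)")
proof -
  define X1 where "X1 = {t \<in> arcs G. fst t \<in> S1 \<union> nbrs G x1}"
  define X2 where "X2 = {t \<in> arcs G. snd t \<in> S2 \<union> nbrs G x2}"
  have fin: "finite (arcs G)"
    using finite_arcs[OF graphs_deg_simple[OF G]] .
  have "?Y \<subseteq> arcs G" "X1 \<subseteq> arcs G" "X2 \<subseteq> arcs G"
    unfolding arcs_def X1_def X2_def by auto
  then have "finite (?Y \<union> X1 \<union> X2)"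
    using fin finite_subset by auto
  then have "card (arcs (G - K)) \<le> card (?Y \<union> X1 \<union> X2)"
    by (rule card_mono) (auto simp: X1_def X2_def arcs_def)
  also have "\<dots> \<le> card ?Y + card X1 + card X2"
    by (meson add_mono card_Un_le le_refl order_trans)
  finally have "card (arcs (G - K)) \<le> card ?Y + card X1 + card X2" .
  moreover have "card X1 \<le> (m + 1) * Jd n d" "card X2 \<le> (m + 1) * Jd n d"
    using card_arcs_near_le[OF sorted G S(1) x(1)] card_arcs_near_le[OF sorted G S(2) x(2)] S(3,4)
    unfolding X1_def X2_def by (meson add_le_mono1 le_trans mult_le_mono1)+
  ultimately have "card (arcs (G - K)) \<le> card ?Y + 2 * ((m + 1) * Jd n d)"
    by linarith
  then have "real (card (arcs (G - K))) \<le> real (card ?Y + 2 * ((m + 1) * Jd n d))"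
    by (rule of_nat_mono)
  then show ?thesis
    using card_arcs_Diff[OF G assms(3)] by (simp add: algebra_simps)
qed

section \<open>Switchings\<close>

lemma double_counting_le:
  fixes \<alpha> \<beta> :: real
  assumes fin: "finite A" "finite B" "\<And>G. G \<in> A \<Longrightarrow> finite (S G)" "\<And>G. G \<in> B \<Longrightarrow> finite (T G)"
    and inj: "inj_on \<Phi> (Sigma A S)" "\<Phi> ` Sigma A S \<subseteq> Sigma B T"
    and bounds: "\<And>G. G \<in> A \<Longrightarrow> \<alpha> \<le> card (S G)" "\<And>G. G \<in> B \<Longrightarrow> card (T G) \<le> \<beta>"
  shows "card A * \<alpha> \<le> card B * \<beta>"
proof -
  have "card A * \<alpha> \<le> (\<Sum>G\<in>A. real (card (S G)))"
    using sum_mono[of A "\<lambda>_. \<alpha>", OF bounds(1)] by simp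
  also have "\<dots> = real (card (Sigma A S))"
    using fin by (simp add: card_SigmaI)
  also have "\<dots> \<le> real (card (Sigma B T))"
    using fin inj by (intro of_nat_mono card_inj_on_le) auto
  also have "\<dots> = (\<Sum>G\<in>B. real (card (T G)))"
    using fin by (simp add: card_SigmaI)
  also have "\<dots> \<le> card B * \<beta>"
    using sum_bounded_above[of B "\<lambda>G. real (card (T G))", OF bounds(2)] by simp
  finally show ?thesis .
qed

lemma inj_on_switching:
  assumes "\<And>G t. (G, t) \<in> X \<Longrightarrow> R t \<subseteq> G \<and> A t \<inter> G = {}" and "inj \<rho>"
  shows "inj_on (\<lambda>(G, t). ((G - R t) \<union> A t, \<rho> t)) X"
proof (rule inj_onI, clarify)
  fix G t G' t'
  assume "(G, t) \<in> X" "(G', t') \<in> X" and eq: "(G - R t) \<union> A t = (G' - R t') \<union> A t'" "\<rho> t = \<rho> t'"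
  then have "t = t'" "R t \<subseteq> G" "A t \<inter> G = {}" "R t' \<subseteq> G'" "A t' \<inter> G' = {}"
    using assms by (auto dest: injD)
  then have "G = ((G - R t) \<union> A t - A t) \<union> R t" "G' = ((G' - R t') \<union> A t' - A t') \<union> R t'"
    by blast+
  then show "G = G' \<and> t = t'"
    using eq \<open>t = t'\<close> by simp
qed

lemma two_switch:
  assumes G: "G \<in> graphs_deg n d" and K: "K \<subseteq> G" "{u, v} \<in> G" "{u, v} \<notin> K"
    and xy: "(x, y) \<in> arcs (G - K)" "x \<notin> {u} \<union> nbrs G u" "y \<notin> {v} \<union> nbrs G v"
  defines "R \<equiv> {{u, v}, {x, y}}" and "A \<equiv> {{u, x}, {v, y}}"
  shows "R \<subseteq> G" "A \<inter> G = {}" "(G - R) \<union> A \<in> graphs_deg n d"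
    "K \<subseteq> (G - R) \<union> A" "{u, v} \<notin> (G - R) \<union> A"
    "(x, y) \<in> (nbrs ((G - R) \<union> A) u - nbrs K u) \<times> (nbrs ((G - R) \<union> A) v - nbrs K v)"
proof -
  have sG: "simple_graph n G" using graphs_deg_simple[OF G] .
  have "{x, y} \<in> G" "{x, y} \<notin> K"
    using xy(1) unfolding arcs_def by auto
  then have "x \<noteq> y" "x \<in> {1..n}" "y \<in> {1..n}"
    using simple_graph_edgeD[OF sG] by auto
  have "u \<noteq> v" "u \<in> {1..n}" "v \<in> {1..n}"
    using simple_graph_edgeD[OF sG K(2)] by auto
  have "x \<noteq> u" "x \<noteq> v" "y \<noteq> v" "y \<noteq> u" "{u, x} \<notin> G" "{v, y} \<notin> G"
    using xy(2,3) K(2) unfolding nbrs_def by (auto simp: insert_commute)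
  show "R \<subseteq> G" "A \<inter> G = {}"
    unfolding R_def A_def using K(2) \<open>{x, y} \<in> G\<close> \<open>{u, x} \<notin> G\<close> \<open>{v, y} \<notin> G\<close> by auto
  moreover have "simple_graph n A"
    unfolding A_def using \<open>u \<in> {1..n}\<close> \<open>v \<in> {1..n}\<close> \<open>x \<in> {1..n}\<close> \<open>y \<in> {1..n}\<close>
      \<open>x \<noteq> u\<close> \<open>y \<noteq> v\<close> by (intro simple_graph_insert simple_graph_empty) auto
  moreover have "deg R i = deg A i" for i
    unfolding R_def A_def using \<open>x \<noteq> y\<close> \<open>u \<noteq> v\<close> \<open>x \<noteq> u\<close> \<open>x \<noteq> v\<close> \<open>y \<noteq> v\<close> \<open>y \<noteq> u\<close>
    by (simp add: deg_insert_edge deg_empty doubleton_eq_iff)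
  ultimately show "(G - R) \<union> A \<in> graphs_deg n d"
    using switch_in_graphs_deg[OF G] by blast
  show "K \<subseteq> (G - R) \<union> A" "{u, v} \<notin> (G - R) \<union> A"
    unfolding R_def A_def using K \<open>{x, y} \<notin> K\<close> \<open>x \<noteq> v\<close> \<open>y \<noteq> u\<close> by (auto simp: doubleton_eq_iff)
  show "(x, y) \<in> (nbrs ((G - R) \<union> A) u - nbrs K u) \<times> (nbrs ((G - R) \<union> A) v - nbrs K v)"
    unfolding R_def A_def nbrs_def using K(1) \<open>{u, x} \<notin> G\<close> \<open>{v, y} \<notin> G\<close> by auto
qed

lemma three_switch:
  assumes G: "G \<in> graphs_deg n d" and K: "K \<subseteq> G" "{u, v} \<notin> G"
    and uv: "u \<noteq> v" "u \<in> {1..n}" "v \<in> {1..n}"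
    and xy: "x \<in> nbrs G u - nbrs K u" "y \<in> nbrs G v - nbrs K v"
    and wz: "(w, z) \<in> arcs (G - K)" "w \<notin> {x, u, v, y} \<union> nbrs G x" "z \<notin> {y, u, v, x} \<union> nbrs G y"
  defines "R \<equiv> {{u, x}, {v, y}, {w, z}}" and "A \<equiv> {{u, v}, {x, w}, {y, z}}"
  shows "R \<subseteq> G" "A \<inter> G = {}" "(G - R) \<union> A \<in> graphs_deg n d"
    "insert {u, v} K \<subseteq> (G - R) \<union> A"
    "((x, w), (y, z)) \<in> arcs ((G - R) \<union> A - K) \<times> arcs ((G - R) \<union> A - K)"
proof -
  have sG: "simple_graph n G" using graphs_deg_simple[OF G] .
  have "{u, x} \<in> G" "{u, x} \<notin> K" "{v, y} \<in> G" "{v, y} \<notin> K" "{w, z} \<in> G" "{w, z} \<notin> K"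
    using xy wz(1) unfolding nbrs_def arcs_def by auto
  then have "u \<noteq> x" "x \<in> {1..n}" "v \<noteq> y" "y \<in> {1..n}" "w \<noteq> z" "w \<in> {1..n}" "z \<in> {1..n}"
    using simple_graph_edgeD[OF sG] by blast+
  have "x \<noteq> v" "y \<noteq> u"
    using K(2) \<open>{u, x} \<in> G\<close> \<open>{v, y} \<in> G\<close> by (auto simp: insert_commute)
  have "w \<noteq> x" "w \<noteq> u" "w \<noteq> v" "w \<noteq> y" "{x, w} \<notin> G"
    and "z \<noteq> y" "z \<noteq> u" "z \<noteq> v" "z \<noteq> x" "{y, z} \<notin> G"
    using wz(2,3) unfolding nbrs_def by auto
  show "R \<subseteq> G" "A \<inter> G = {}"
    unfolding R_def A_def using \<open>{u, x} \<in> G\<close> \<open>{v, y} \<in> G\<close> \<open>{w, z} \<in> G\<close> K(2)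
      \<open>{x, w} \<notin> G\<close> \<open>{y, z} \<notin> G\<close> by auto
  moreover have "simple_graph n A"
    unfolding A_def using uv \<open>x \<in> {1..n}\<close> \<open>y \<in> {1..n}\<close> \<open>w \<in> {1..n}\<close> \<open>z \<in> {1..n}\<close>
      \<open>w \<noteq> x\<close> \<open>z \<noteq> y\<close> by (intro simple_graph_insert simple_graph_empty) auto
  moreover have "deg R i = deg A i" for i
    unfolding R_def A_def using uv(1) \<open>u \<noteq> x\<close> \<open>v \<noteq> y\<close> \<open>w \<noteq> z\<close> \<open>x \<noteq> v\<close> \<open>y \<noteq> u\<close>
      \<open>w \<noteq> x\<close> \<open>w \<noteq> u\<close> \<open>w \<noteq> v\<close> \<open>w \<noteq> y\<close> \<open>z \<noteq> y\<close> \<open>z \<noteq> u\<close> \<open>z \<noteq> v\<close> \<open>z \<noteq> x\<close>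
    by (simp add: deg_insert_edge deg_empty doubleton_eq_iff)
  ultimately show "(G - R) \<union> A \<in> graphs_deg n d"
    using switch_in_graphs_deg[OF G] by blast
  show "insert {u, v} K \<subseteq> (G - R) \<union> A"
    unfolding R_def A_def using K(1) \<open>{u, x} \<notin> K\<close> \<open>{v, y} \<notin> K\<close> \<open>{w, z} \<notin> K\<close> by auto
  show "((x, w), (y, z)) \<in> arcs ((G - R) \<union> A - K) \<times> arcs ((G - R) \<union> A - K)"
    unfolding R_def A_def arcs_def using K(1) \<open>{x, w} \<notin> G\<close> \<open>{y, z} \<notin> G\<close> by auto
qed

text \<open>
  A graph G containing uv admits at least M - 2|K| - 4J switchings with an arc (x, y) of G - K;
  the switched graph determines (x, y) as new neighbours of u and v outside K, so each graph
  avoiding uv arises at most (d_u - deg_K u) (d_v - deg_K v) times.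
\<close>

lemma card_insert_edge_supergraphs_le:
  assumes sorted: "nonincreasing_on n d" and uv: "u \<in> {1..n}" "v \<in> {1..n}" and "{u, v} \<notin> K"
  shows "card {G \<in> graphs_deg n d. insert {u, v} K \<subseteq> G}
           * (real (Mtot n d) - 2 * real (card K) - 4 * real (Jd n d))
         \<le> card {G \<in> graphs_deg n d. K \<subseteq> G \<and> {u, v} \<notin> G}
           * (real (d u - deg K u) * real (d v - deg K v))"
proof -
  define S where "S G = {t \<in> arcs (G - K). fst t \<notin> {u} \<union> nbrs G u \<and> snd t \<notin> {v} \<union> nbrs G v}" for G
  define T where "T G = (nbrs G u - nbrs K u) \<times> (nbrs G v - nbrs K v)" for G
  define R where "R t = {{u, v}, {fst t, snd t}}" for t :: "nat \<times> nat"
  define A where "A t = {{u, fst t}, {v, snd t}}" for t :: "nat \<times> nat"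
  let ?A = "{G \<in> graphs_deg n d. insert {u, v} K \<subseteq> G}"
  let ?B = "{G \<in> graphs_deg n d. K \<subseteq> G \<and> {u, v} \<notin> G}"
  have switch: "R t \<subseteq> G \<and> A t \<inter> G = {} \<and> ((G - R t) \<union> A t, t) \<in> Sigma ?B T"
    if "(G, t) \<in> Sigma ?A S" for G t
    using two_switch[of G n d K u v "fst t" "snd t"] that assms(4)
    unfolding S_def T_def R_def A_def by auto
  show ?thesis
  proof (rule double_counting_le[where \<Phi> = "\<lambda>(G, t). ((G - R t) \<union> A t, id t)"])
    show "inj_on (\<lambda>(G, t). ((G - R t) \<union> A t, id t)) (Sigma ?A S)"
      using switch by (intro inj_on_switching) auto
    show "(\<lambda>(G, t). ((G - R t) \<union> A t, id t)) ` Sigma ?A S \<subseteq> Sigma ?B T"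
      using switch by auto
    show "real (Mtot n d) - 2 * real (card K) - 4 * real (Jd n d) \<le> card (S G)" if "G \<in> ?A" for G
      using card_arcs_avoiding_ge[OF sorted, of G K "{u}" "{v}" 1 u v] that uv
      unfolding S_def by auto
    show "card (T G) \<le> real (d u - deg K u) * real (d v - deg K v)" if "G \<in> ?B" for G
      using that uv card_nbrs_Diff[of G n d K u] card_nbrs_Diff[of G n d K v]
      unfolding T_def by (simp add: card_cartesian_product)
    show "finite (S G)" if "G \<in> ?A" for G
    proof (rule finite_subset)
      show "S G \<subseteq> arcs G"
        unfolding S_def arcs_def by auto
      show "finite (arcs G)"
        using that finite_arcs[OF graphs_deg_simple] by blast
    qed
    show "finite (T G)" if "G \<in> ?B" for G
      using that finite_nbrs[OF graphs_deg_simple] unfolding T_def by auto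
  qed (simp_all add: finite_graphs_deg)
qed

lemma card_three_switch_choices_ge:
  assumes sorted: "nonincreasing_on n d" and G: "G \<in> graphs_deg n d" "K \<subseteq> G"
    and uv: "u \<in> {1..n}" "v \<in> {1..n}"
  defines "W x y \<equiv> {t \<in> arcs (G - K). fst t \<notin> {x, u, v, y} \<union> nbrs G x \<and> snd t \<notin> {y, u, v, x} \<union> nbrs G y}"
  shows "real (d u - deg K u) * real (d v - deg K v) * (real (Mtot n d) - 2 * real (card K) - 10 * real (Jd n d))
    \<le> card (Sigma ((nbrs G u - nbrs K u) \<times> (nbrs G v - nbrs K v)) (\<lambda>(x, y). W x y))"
proof -
  let ?XY = "(nbrs G u - nbrs K u) \<times> (nbrs G v - nbrs K v)"
  have sG: "simple_graph n G"
    using graphs_deg_simple[OF G(1)] .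
  have card_W: "real (Mtot n d) - 2 * real (card K) - 10 * real (Jd n d) \<le> card (W x y)"
    if "(x, y) \<in> ?XY" for x y
  proof -
    have "x \<in> {1..n}" "y \<in> {1..n}"
      using that nbrs_subset[OF sG] by blast+
    moreover have "card {x, u, v, y} \<le> 4" "card {y, u, v, x} \<le> 4"
      using card_length[of "[x, u, v, y]"] card_length[of "[y, u, v, x]"] by simp_all
    ultimately show ?thesis
      using card_arcs_avoiding_ge[OF sorted G, of "{x, u, v, y}" "{y, u, v, x}" 4 x y] uv
      unfolding W_def by simp
  qed
  have "finite (W x y)" for x y
    by (rule finite_subset[OF _ finite_arcs[OF sG]]) (auto simp: W_def arcs_def)
  moreover have "finite ?XY"
    using finite_nbrs[OF sG] by blast
  moreover have "card ?XY * (real (Mtot n d) - 2 * real (card K) - 10 * real (Jd n d))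
      \<le> (\<Sum>(x, y)\<in>?XY. real (card (W x y)))"
    using sum_mono[of ?XY "\<lambda>_. real (Mtot n d) - 2 * real (card K) - 10 * real (Jd n d)"
        "\<lambda>(x, y). real (card (W x y))"] card_W by force
  ultimately show ?thesis
    using G uv card_nbrs_Diff[OF G, of u] card_nbrs_Diff[OF G, of v]
    by (simp add: card_SigmaI card_cartesian_product case_prod_unfold)
qed

text \<open>
  The reverse switching: a graph avoiding uv admits at least (d_u - deg_K u) (d_v - deg_K v)
  (M - 2|K| - 10J) choices of x, y and of an arc (w, z) of G - K, and the switched graph together
  with its arcs (x, w), (y, z) outside K determines the switching.
\<close>

lemma card_edge_avoiding_supergraphs_le:
  assumes sorted: "nonincreasing_on n d" and uv: "u \<noteq> v" "u \<in> {1..n}" "v \<in> {1..n}"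
  shows "card {G \<in> graphs_deg n d. K \<subseteq> G \<and> {u, v} \<notin> G}
           * (real (d u - deg K u) * real (d v - deg K v)
              * (real (Mtot n d) - 2 * real (card K) - 10 * real (Jd n d)))
         \<le> card {G \<in> graphs_deg n d. insert {u, v} K \<subseteq> G} * (real (Mtot n d) - 2 * real (card K))\<^sup>2"
proof -
  define W where "W G x y = {t \<in> arcs (G - K).
    fst t \<notin> {x, u, v, y} \<union> nbrs G x \<and> snd t \<notin> {y, u, v, x} \<union> nbrs G y}" for G x y
  define S where "S G = Sigma ((nbrs G u - nbrs K u) \<times> (nbrs G v - nbrs K v)) (\<lambda>(x, y). W G x y)" for G
  define T where "T G = arcs (G - K) \<times> arcs (G - K)" for G
  define R where "R s = {{u, fst (fst s)}, {v, snd (fst s)}, {fst (snd s), snd (snd s)}}"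
    for s :: "(nat \<times> nat) \<times> (nat \<times> nat)"
  define A where "A s = {{u, v}, {fst (fst s), fst (snd s)}, {snd (fst s), snd (snd s)}}"
    for s :: "(nat \<times> nat) \<times> (nat \<times> nat)"
  define \<rho> where "\<rho> s = ((fst (fst s), fst (snd s)), (snd (fst s), snd (snd s)))"
    for s :: "(nat \<times> nat) \<times> (nat \<times> nat)"
  let ?A = "{G \<in> graphs_deg n d. insert {u, v} K \<subseteq> G}"
  let ?B = "{G \<in> graphs_deg n d. K \<subseteq> G \<and> {u, v} \<notin> G}"
  have switch: "R s \<subseteq> G \<and> A s \<inter> G = {} \<and> ((G - R s) \<union> A s, \<rho> s) \<in> Sigma ?A T"
    if "(G, s) \<in> Sigma ?B S" for G s
  proof -
    obtain x y w z where "s = ((x, y), (w, z))"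
      by (metis prod.collapse)
    then show ?thesis
      using three_switch[of G n d K u v x y w z] that uv
      unfolding S_def W_def T_def R_def A_def \<rho>_def by auto
  qed
  have fin_arcs: "finite (arcs G)" if "G \<in> graphs_deg n d" for G
    using that finite_arcs[OF graphs_deg_simple] by blast
  have fin_W: "finite (W G x y)" if "G \<in> graphs_deg n d" for G x y
    by (rule finite_subset[OF _ fin_arcs[OF that]]) (auto simp: W_def arcs_def)
  show ?thesis
  proof (rule double_counting_le[where \<Phi> = "\<lambda>(G, s). ((G - R s) \<union> A s, \<rho> s)"])
    show "inj_on (\<lambda>(G, s). ((G - R s) \<union> A s, \<rho> s)) (Sigma ?B S)"
      using switch by (intro inj_on_switching) (auto simp: inj_def \<rho>_def prod_eq_iff)
    show "(\<lambda>(G, s). ((G - R s) \<union> A s, \<rho> s)) ` Sigma ?B S \<subseteq> Sigma ?A T"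
    proof (rule image_subsetI)
      fix p assume p: "p \<in> Sigma ?B S"
      obtain G s where "p = (G, s)"
        by (cases p) blast
      with p switch have "((G - R s) \<union> A s, \<rho> s) \<in> Sigma ?A T"
        by blast
      with \<open>p = (G, s)\<close> show "(\<lambda>(G, s). ((G - R s) \<union> A s, \<rho> s)) p \<in> Sigma ?A T"
        by (simp only: prod.case)
    qed
    show "card (T G) \<le> (real (Mtot n d) - 2 * real (card K))\<^sup>2" if "G \<in> ?A" for G
      using that card_arcs_Diff[of G n d K] unfolding T_def
      by (simp add: card_cartesian_product power2_eq_square)
    show "finite (S G)" if "G \<in> ?B" for G
      using that fin_W finite_nbrs[OF graphs_deg_simple] unfolding S_def by auto
    show "finite (T G)" if "G \<in> ?A" for G
    proof -
      have "arcs (G - K) \<subseteq> arcs G"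
        unfolding arcs_def by auto
      then have "finite (arcs (G - K))"
        by (rule finite_subset) (use that fin_arcs in blast)
      then show ?thesis
        unfolding T_def by simp
    qed
    show "real (d u - deg K u) * real (d v - deg K v) * (real (Mtot n d) - 2 * real (card K) - 10 * real (Jd n d))
        \<le> card (S G)" if "G \<in> ?B" for G
      using card_three_switch_choices_ge[OF sorted _ _ uv(2,3), of G K] that unfolding S_def W_def by simp
  qed (simp_all add: finite_graphs_deg)
qed

section \<open>Counting supergraphs\<close>

definition num_supergraphs :: "nat \<Rightarrow> (nat \<Rightarrow> nat) \<Rightarrow> nat set set \<Rightarrow> nat" where
  "num_supergraphs n d K = card {G \<in> graphs_deg n d. K \<subseteq> G}"

definition deg_ffall :: "nat \<Rightarrow> (nat \<Rightarrow> nat) \<Rightarrow> nat set set \<Rightarrow> real" where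
  "deg_ffall n d K = (\<Prod>i=1..n. ffall (real (d i)) (deg K i))"

definition ffall2 :: "real \<Rightarrow> nat \<Rightarrow> real" where
  "ffall2 x k = (\<Prod>i=1..k. x - 2 * real i + 2)"

lemma num_supergraphs_split:
  "num_supergraphs n d K = num_supergraphs n d (insert p K) + card {G \<in> graphs_deg n d. K \<subseteq> G \<and> p \<notin> G}"
proof -
  have "{G \<in> graphs_deg n d. K \<subseteq> G}
      = {G \<in> graphs_deg n d. insert p K \<subseteq> G} \<union> {G \<in> graphs_deg n d. K \<subseteq> G \<and> p \<notin> G}"
    by auto
  then show ?thesis
    unfolding num_supergraphs_def by (simp add: card_Un_disjoint finite_graphs_deg disjoint_iff)
qed

lemma num_supergraphs_eq_0:
  assumes "i \<in> {1..n}" "d i < deg K i"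
  shows "num_supergraphs n d K = 0"
proof -
  have "deg K i \<le> d i" if "G \<in> graphs_deg n d" "K \<subseteq> G" for G
    using deg_mono[OF simple_graph_finite[OF graphs_deg_simple] that(2)] graphs_deg_deg assms(1) that(1)
    by metis
  then show ?thesis
    unfolding num_supergraphs_def using assms(2) by (simp add: finite_graphs_deg) (meson leD)
qed

lemma num_supergraphs_empty_pos: "graphical n d \<Longrightarrow> 0 < num_supergraphs n d {}"
  unfolding num_supergraphs_def graphical_def by (simp add: card_gt_0_iff finite_graphs_deg)

lemma prob_contains_eq: "prob_contains n d H = num_supergraphs n d H / num_supergraphs n d {}"
  unfolding prob_contains_def num_supergraphs_def by simp

lemma ffall_0 [simp]: "ffall x 0 = 1"
  unfolding ffall_def by simp

lemma ffall_Suc: "ffall (real m) (Suc k) = ffall (real m) k * real (m - k)"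
proof (cases "k \<le> m")
  case True
  then show ?thesis
    unfolding ffall_def by (simp add: lessThan_Suc of_nat_diff mult.commute)
next
  case False
  then have "ffall (real m) k = 0"
    unfolding ffall_def by (intro prod_zero) (auto intro: bexI[of _ m])
  with False show ?thesis
    unfolding ffall_def by (simp add: lessThan_Suc)
qed

lemma ffall_nonneg: "0 \<le> ffall (real m) k"
  by (induction k) (simp_all add: ffall_Suc)

lemma ffall_eq_0_iff: "ffall (real m) k = 0 \<longleftrightarrow> m < k"
  by (induction k) (auto simp: ffall_Suc)

lemma deg_ffall_nonneg: "0 \<le> deg_ffall n d K"
  unfolding deg_ffall_def by (intro prod_nonneg) (simp add: ffall_nonneg)

lemma deg_ffall_eq_0_iff: "deg_ffall n d K = 0 \<longleftrightarrow> (\<exists>i\<in>{1..n}. d i < deg K i)"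
  unfolding deg_ffall_def by (simp add: ffall_eq_0_iff)

lemma deg_ffall_empty: "deg_ffall n d {} = 1"
  unfolding deg_ffall_def by (simp add: deg_empty)

lemma deg_ffall_insert:
  assumes "finite K" "{u, v} \<notin> K" "u \<noteq> v" "u \<in> {1..n}" "v \<in> {1..n}"
  shows "deg_ffall n d (insert {u, v} K)
    = deg_ffall n d K * (real (d u - deg K u) * real (d v - deg K v))"
proof -
  have "ffall (real (d i)) (deg (insert {u, v} K) i) = ffall (real (d i)) (deg K i)
      * ((if i = u then real (d u - deg K u) else 1) * (if i = v then real (d v - deg K v) else 1))" for i
    using deg_insert_edge[OF assms(1-3), of i] assms(3) by (auto simp: ffall_Suc)
  then show ?thesis
    unfolding deg_ffall_def using assms(4,5) by (simp add: prod.distrib)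
qed

lemma ffall2_0 [simp]: "ffall2 x 0 = 1"
  unfolding ffall2_def by simp

lemma ffall2_Suc: "ffall2 x (Suc k) = ffall2 x k * (x - 2 * real k)"
  unfolding ffall2_def by (simp add: algebra_simps)

lemma ffall2_pos: "2 * real k \<le> x \<Longrightarrow> 0 < ffall2 x k"
  unfolding ffall2_def by (intro prod_pos) auto

lemma ffall2_le_shift:
  assumes "0 \<le> \<delta>" "2 * real k + \<delta> < x"
  shows "ffall2 x k \<le> (1 + \<delta> / (x - 2 * real k - \<delta>)) ^ k * ffall2 (x - \<delta>) k"
proof -
  let ?D = "x - 2 * real k - \<delta>"
  have "x - 2 * real i + 2 \<le> (1 + \<delta> / ?D) * (x - \<delta> - 2 * real i + 2)" if "i \<in> {1..k}" for i
  proof -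
    have "?D \<le> x - \<delta> - 2 * real i + 2"
      using that by auto
    have "\<delta> = \<delta> / ?D * ?D"
      using assms by simp
    also have "\<dots> \<le> \<delta> / ?D * (x - \<delta> - 2 * real i + 2)"
      using \<open>?D \<le> _\<close> assms by (intro mult_left_mono) auto
    finally have "\<delta> \<le> \<delta> / ?D * (x - \<delta> - 2 * real i + 2)" .
    then show ?thesis
      by (simp add: algebra_simps)
  qed
  then have "ffall2 x k \<le> (\<Prod>i=1..k. (1 + \<delta> / ?D) * (x - \<delta> - 2 * real i + 2))"
    unfolding ffall2_def using assms by (intro prod_mono) auto
  then show ?thesis
    unfolding ffall2_def by (simp add: prod.distrib)
qed

lemma num_supergraphs_insert_le:
  assumes "nonincreasing_on n d" "u \<in> {1..n}" "v \<in> {1..n}" "{u, v} \<notin> K"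
  shows "num_supergraphs n d (insert {u, v} K) * (real (Mtot n d) - 2 * real (card K) - 4 * real (Jd n d))
    \<le> num_supergraphs n d K * (real (d u - deg K u) * real (d v - deg K v))"
proof -
  have "real (card {G \<in> graphs_deg n d. K \<subseteq> G \<and> {u, v} \<notin> G}) \<le> num_supergraphs n d K"
    using num_supergraphs_split[of n d K "{u, v}"] by simp
  then have "card {G \<in> graphs_deg n d. K \<subseteq> G \<and> {u, v} \<notin> G} * (real (d u - deg K u) * real (d v - deg K v))
      \<le> num_supergraphs n d K * (real (d u - deg K u) * real (d v - deg K v))"
    by (rule mult_right_mono) simp
  with card_insert_edge_supergraphs_le[OF assms] show ?thesis
    unfolding num_supergraphs_def by (rule order_trans)
qed

lemma num_supergraphs_insert_ge:
  fixes W s :: real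
  assumes "nonincreasing_on n d" "u \<noteq> v" "u \<in> {1..n}" "v \<in> {1..n}" "{u, v} \<notin> K"
    and W: "10 * real (Jd n d) < W" "W \<le> real (Mtot n d) - 2 * real (card K)"
    and s: "real (d u - deg K u) * real (d v - deg K v) \<le> s"
  shows "real (num_supergraphs n d K) * (real (d u - deg K u) * real (d v - deg K v))
    \<le> num_supergraphs n d (insert {u, v} K) * (real (Mtot n d) - 2 * real (card K))
      * (1 + s / W + 10 * real (Jd n d) / (W - 10 * real (Jd n d)))"
proof -
  define X where "X = real (Mtot n d) - 2 * real (card K)"
  define ab where "ab = real (d u - deg K u) * real (d v - deg K v)"
  let ?J = "real (Jd n d)"
  let ?N = "real (num_supergraphs n d (insert {u, v} K))"
  let ?B = "real (card {G \<in> graphs_deg n d. K \<subseteq> G \<and> {u, v} \<notin> G})"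
  have X: "0 < W" "W \<le> X" "10 * ?J < X" "0 \<le> ab"
    using W of_nat_0_le_iff[of "Jd n d"] unfolding X_def ab_def by simp_all
  have "?B * ab \<le> ?N * X\<^sup>2 / (X - 10 * ?J)"
    using card_edge_avoiding_supergraphs_le[OF assms(1-4), of K] X
    unfolding X_def ab_def num_supergraphs_def by (simp add: pos_le_divide_eq mult.assoc)
  then have "real (num_supergraphs n d K) * ab \<le> ?N * X * (ab / X + X / (X - 10 * ?J))"
    using num_supergraphs_split[of n d K "{u, v}"] X
    by (simp add: algebra_simps power2_eq_square add_divide_distrib)
  also have "\<dots> \<le> ?N * X * (1 + s / W + 10 * ?J / (W - 10 * ?J))"
  proof (rule mult_left_mono)
    have "0 \<le> s"
      using X(4) s unfolding ab_def by linarith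
    then have "ab / X \<le> s / W"
      using frac_le[OF _ _ X(1,2)] s unfolding ab_def by blast
    moreover have "X / (X - 10 * ?J) = 1 + 10 * ?J / (X - 10 * ?J)"
      using X by (simp add: field_simps)
    moreover have "10 * ?J / (X - 10 * ?J) \<le> 10 * ?J / (W - 10 * ?J)"
      using X W by (intro frac_le) auto
    ultimately show "ab / X + X / (X - 10 * ?J) \<le> 1 + s / W + 10 * ?J / (W - 10 * ?J)"
      by linarith
  qed (use X in simp)
  finally show ?thesis
    unfolding X_def ab_def .
qed

lemma num_supergraphs_upper:
  assumes sorted: "nonincreasing_on n d"
  shows "finite K \<Longrightarrow> simple_graph n K \<Longrightarrow> 2 * real (card K) + 4 * real (Jd n d) \<le> real (Mtot n d) \<Longrightarrow>
    num_supergraphs n d K * ffall2 (real (Mtot n d) - 4 * real (Jd n d)) (card K)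
      \<le> num_supergraphs n d {} * deg_ffall n d K"
proof (induction K rule: finite_induct)
  case empty
  then show ?case by (simp add: deg_ffall_empty)
next
  case (insert p K)
  obtain u v where uv: "u \<noteq> v" "u \<in> {1..n}" "v \<in> {1..n}" "p = {u, v}"
    using simple_graph_edgeE[OF insert(4)] by blast
  let ?X = "real (Mtot n d) - 4 * real (Jd n d)"
  let ?ab = "real (d u - deg K u) * real (d v - deg K v)"
  have IH: "num_supergraphs n d K * ffall2 ?X (card K) \<le> num_supergraphs n d {} * deg_ffall n d K"
    using insert simple_graph_subset[OF insert(4)] by auto
  have "num_supergraphs n d (insert p K) * ffall2 ?X (card (insert p K))
      = (num_supergraphs n d (insert p K) * (real (Mtot n d) - 2 * real (card K) - 4 * real (Jd n d)))
        * ffall2 ?X (card K)"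
    using insert(1,2) by (simp add: ffall2_Suc algebra_simps)
  also have "\<dots> \<le> (num_supergraphs n d K * ?ab) * ffall2 ?X (card K)"
    using num_supergraphs_insert_le[OF sorted uv(2,3)] insert(1,2,5) uv(4)
    by (intro mult_right_mono less_imp_le[OF ffall2_pos]) auto
  also have "\<dots> = (num_supergraphs n d K * ffall2 ?X (card K)) * ?ab"
    by (simp only: ac_simps)
  also have "\<dots> \<le> (num_supergraphs n d {} * deg_ffall n d K) * ?ab"
    using IH by (rule mult_right_mono) simp
  also have "\<dots> = num_supergraphs n d {} * deg_ffall n d (insert p K)"
    using deg_ffall_insert[OF insert(1) _ uv(1-3)] insert(2) uv(4) by simp
  finally show ?case .
qed

lemma le_Delta_set: "finite S \<Longrightarrow> u \<in> S \<Longrightarrow> d u \<le> Delta_set d S"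
  unfolding Delta_set_def by (rule Max_ge) auto

lemma finite_boundary: "simple_graph n H \<Longrightarrow> finite (boundary H)"
  unfolding boundary_def using simple_graph_finite simple_graph_edgeE by (metis finite.emptyI finite.insertI finite_Union)

lemma num_supergraphs_lower:
  fixes W :: real
  assumes sorted: "nonincreasing_on n d" and sH: "simple_graph n H" and "K \<subseteq> H"
    and W: "W = real (Mtot n d) - 2 * real (card H)" "10 * real (Jd n d) < W"
  defines "q \<equiv> 1 + real (Delta_set d (boundary H)) ^ 2 / W + 10 * real (Jd n d) / (W - 10 * real (Jd n d))"
  shows "num_supergraphs n d {} * deg_ffall n d K
    \<le> num_supergraphs n d K * ffall2 (real (Mtot n d)) (card K) * q ^ card K"
proof -
  let ?\<Delta> = "real (Delta_set d (boundary H))"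
  have "finite K"
    using finite_subset[OF \<open>K \<subseteq> H\<close> simple_graph_finite[OF sH]] .
  then show ?thesis
    using \<open>K \<subseteq> H\<close>
  proof (induction K rule: finite_subset_induct')
    case empty
    then show ?case by (simp add: deg_ffall_empty)
  next
    case (insert p K)
    obtain u v where uv: "u \<noteq> v" "u \<in> {1..n}" "v \<in> {1..n}" "p = {u, v}"
      using simple_graph_edgeE[OF sH insert(2)] by blast
    define X where "X = real (Mtot n d) - 2 * real (card K)"
    define ab where "ab = real (d u - deg K u) * real (d v - deg K v)"
    have "card (insert p K) \<le> card H"
      using card_mono[OF simple_graph_finite[OF sH]] insert(2,3) by simp
    then have XW: "W + 2 \<le> X"
      using insert(1,4) W(1) unfolding X_def by simp
    have "u \<in> boundary H" "v \<in> boundary H"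
      using insert(2) uv(4) unfolding boundary_def by auto
    then have "d u \<le> Delta_set d (boundary H)" "d v \<le> Delta_set d (boundary H)"
      using le_Delta_set[OF finite_boundary[OF sH]] by auto
    then have "ab \<le> ?\<Delta>\<^sup>2"
      unfolding ab_def power2_eq_square by (intro mult_mono) auto
    have "0 \<le> q" "0 < X"
      using XW W(2) unfolding q_def by auto
    have "0 \<le> ffall2 (real (Mtot n d)) (card K) * q ^ card K"
      using ffall2_pos[of "card K" "real (Mtot n d)"] \<open>0 \<le> q\<close> \<open>0 < X\<close> unfolding X_def by simp
    have "num_supergraphs n d {} * deg_ffall n d (insert p K)
        = (num_supergraphs n d {} * deg_ffall n d K) * ab"
      using deg_ffall_insert[OF insert(1) _ uv(1-3)] insert(4) uv(4) unfolding ab_def by simp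
    also have "\<dots> \<le> (num_supergraphs n d K * ffall2 (real (Mtot n d)) (card K) * q ^ card K) * ab"
      using insert(5) unfolding ab_def by (intro mult_right_mono) auto
    also have "\<dots> = (num_supergraphs n d K * ab) * (ffall2 (real (Mtot n d)) (card K) * q ^ card K)"
      by (simp only: ac_simps)
    also have "\<dots> \<le> (num_supergraphs n d (insert p K) * X * q)
        * (ffall2 (real (Mtot n d)) (card K) * q ^ card K)"
      using num_supergraphs_insert_ge[OF sorted uv(1-3) _ W(2), where K = K and s = "?\<Delta>\<^sup>2"] \<open>ab \<le> ?\<Delta>\<^sup>2\<close>
        insert(4) uv(4) XW \<open>0 \<le> ffall2 _ _ * _\<close>
      unfolding X_def ab_def q_def by (intro mult_right_mono) auto
    also have "\<dots> = num_supergraphs n d (insert p K) * ffall2 (real (Mtot n d)) (card (insert p K))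
        * q ^ card (insert p K)"
      using insert(1,4) unfolding X_def by (simp add: ffall2_Suc algebra_simps)
    finally show ?case .
  qed
qed

lemma prob_contains_eq_0:
  assumes "deg_ffall n d H = 0"
  shows "prob_contains n d H = 0"
proof -
  obtain i where "i \<in> {1..n}" "d i < deg H i"
    using assms unfolding deg_ffall_eq_0_iff by blast
  then have "num_supergraphs n d H = 0"
    by (rule num_supergraphs_eq_0)
  then show ?thesis
    unfolding prob_contains_eq by simp
qed

lemma twice_card_le_Mtot:
  assumes "simple_graph n H" "deg_ffall n d H \<noteq> 0"
  shows "2 * card H \<le> Mtot n d"
proof -
  have "(\<Sum>i=1..n. deg H i) \<le> (\<Sum>i=1..n. d i)"
    using assms(2) unfolding deg_ffall_eq_0_iff by (intro sum_mono) (simp add: not_less)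
  then show ?thesis
    unfolding Mtot_def sum_deg_eq_twice_card[OF assms(1)] .
qed

lemma Jd_pos:
  assumes "nonincreasing_on n d" "0 < Mtot n d"
  shows "0 < Jd n d"
proof -
  obtain i where "i \<in> {1..n}" "0 < d i"
    using assms(2) unfolding Mtot_def by (metis not_gr0 sum.neutral)
  then show ?thesis
    using nonincreasing_le_first[OF assms(1)] first_le_Jd[of d n] by (meson order_less_le_trans)
qed

lemma deg_ffall_div_ffall2_nonneg:
  assumes "simple_graph n H"
  shows "0 \<le> deg_ffall n d H / ffall2 (real (Mtot n d)) (card H)"
proof (cases "deg_ffall n d H = 0")
  case False
  then have "2 * real (card H) \<le> real (Mtot n d)"
    using twice_card_le_Mtot[OF assms False] by linarith
  then have "0 < ffall2 (real (Mtot n d)) (card H)"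
    by (rule ffall2_pos)
  then show ?thesis
    using deg_ffall_nonneg by simp
qed simp

lemma prob_contains_le:
  assumes G: "graphical n d" and sorted: "nonincreasing_on n d" and sH: "simple_graph n H"
    and W: "W = real (Mtot n d) - 2 * real (card H)" "4 * real (Jd n d) < W"
  shows "prob_contains n d H
    \<le> deg_ffall n d H / ffall2 (real (Mtot n d)) (card H) * (1 + 4 * real (Jd n d) / (W - 4 * real (Jd n d))) ^ card H"
proof -
  let ?M = "real (Mtot n d)" and ?J = "real (Jd n d)" and ?e = "card H"
  let ?c = "(1 + 4 * ?J / (W - 4 * ?J)) ^ ?e"
  have base: "0 < 1 + 4 * ?J / (W - 4 * ?J)"
    using W by (simp add: add_pos_nonneg)
  then have "0 < ?c"
    by simp
  have pos: "0 < ffall2 (?M - 4 * ?J) ?e" "0 < ffall2 ?M ?e" "0 < real (num_supergraphs n d {})"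
    using W num_supergraphs_empty_pos[OF G] by (auto intro!: ffall2_pos)
  have "num_supergraphs n d H * ffall2 (?M - 4 * ?J) ?e \<le> num_supergraphs n d {} * deg_ffall n d H"
    using num_supergraphs_upper[OF sorted simple_graph_finite[OF sH] sH] W by simp
  then have "prob_contains n d H \<le> deg_ffall n d H / ffall2 (?M - 4 * ?J) ?e"
    unfolding prob_contains_eq using pos by (simp add: pos_divide_le_eq pos_le_divide_eq mult.commute)
  also have "\<dots> = deg_ffall n d H * ?c / (?c * ffall2 (?M - 4 * ?J) ?e)"
    using base by simp
  also have "\<dots> \<le> deg_ffall n d H * ?c / ffall2 ?M ?e"
  proof (rule divide_left_mono)
    show "ffall2 ?M ?e \<le> ?c * ffall2 (?M - 4 * ?J) ?e"
      using ffall2_le_shift[of "4 * ?J" ?e ?M] W(2) unfolding W(1) by simp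
  qed (use pos \<open>0 < ?c\<close> deg_ffall_nonneg[of n d H] in auto)
  finally show ?thesis
    by simp
qed

lemma prob_contains_ge:
  assumes G: "graphical n d" and sorted: "nonincreasing_on n d" and sH: "simple_graph n H"
    and W: "W = real (Mtot n d) - 2 * real (card H)" "10 * real (Jd n d) < W"
  shows "deg_ffall n d H / ffall2 (real (Mtot n d)) (card H)
      / (1 + real (Delta_set d (boundary H)) ^ 2 / W + 10 * real (Jd n d) / (W - 10 * real (Jd n d))) ^ card H
    \<le> prob_contains n d H"
proof -
  let ?q = "1 + real (Delta_set d (boundary H)) ^ 2 / W + 10 * real (Jd n d) / (W - 10 * real (Jd n d))"
  have "0 < W"
    using W(2) of_nat_0_le_iff[of "Jd n d"] by linarith
  then have "0 < ?q"
    using W(2) by (simp add: add_pos_nonneg)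
  have pos: "0 < ffall2 (real (Mtot n d)) (card H)" "0 < ?q ^ card H" "0 < real (num_supergraphs n d {})"
    using W \<open>0 < W\<close> \<open>0 < ?q\<close> num_supergraphs_empty_pos[OF G] by (auto intro!: ffall2_pos)
  have "num_supergraphs n d {} * deg_ffall n d H
      \<le> num_supergraphs n d H * ffall2 (real (Mtot n d)) (card H) * ?q ^ card H"
    using num_supergraphs_lower[OF sorted sH order_refl W] .
  then show ?thesis
    unfolding prob_contains_eq using pos
    by (simp add: pos_divide_le_eq pos_le_divide_eq ac_simps)
qed

lemma prob_contains_between:
  assumes G: "graphical n d" and sorted: "nonincreasing_on n d" and sH: "simple_graph n H"
    and W: "W = real (Mtot n d) - 2 * real (card H)" "20 * real (Jd n d) \<le> \<bar>W\<bar>"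
  defines "a \<equiv> deg_ffall n d H / ffall2 (real (Mtot n d)) (card H)"
    and "q \<equiv> 1 + real (Delta_set d (boundary H)) ^ 2 / W + 10 * real (Jd n d) / (W - 10 * real (Jd n d))"
    and "c \<equiv> 1 + 4 * real (Jd n d) / (W - 4 * real (Jd n d))"
  shows "a / q ^ card H \<le> prob_contains n d H \<and> prob_contains n d H \<le> a * c ^ card H"
proof -
  consider "deg_ffall n d H = 0" | "H = {}" | "deg_ffall n d H \<noteq> 0" "H \<noteq> {}"
    by blast
  then show ?thesis
  proof cases
    case 1
    then show ?thesis
      unfolding a_def using prob_contains_eq_0 by simp
  next
    case 2
    then show ?thesis
      unfolding a_def prob_contains_eq using num_supergraphs_empty_pos[OF G]
      by (simp add: deg_ffall_empty)
  next
    case 3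
    have "0 < card H"
      using 3(2) simple_graph_finite[OF sH] by (simp add: card_gt_0_iff)
    then have "0 < Jd n d"
      using twice_card_le_Mtot[OF sH 3(1)] by (intro Jd_pos[OF sorted]) simp
    moreover have "0 \<le> W"
      using twice_card_le_Mtot[OF sH 3(1)] W(1) by linarith
    ultimately have "10 * real (Jd n d) < W"
      using W(2) by simp
    then show ?thesis
      using prob_contains_ge[OF G sorted sH W(1)] prob_contains_le[OF G sorted sH W(1)]
      unfolding a_def q_def c_def by simp
  qed
qed

section \<open>Asymptotics\<close>

lemma smallo_div_shift_tendsto_zero:
  fixes f g :: "nat \<Rightarrow> real"
  assumes "f \<in> o(g)"
  shows "(\<lambda>n. f n / (g n - c * f n)) \<longlonglongrightarrow> 0"
proof -
  have "(\<lambda>n. (- c) * f n) \<in> o(g)"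
    using assms by (cases "c = 0") auto
  then have "(\<lambda>n. g n - c * f n - g n) \<in> o(g)"
    by (rule back_subst[where P = "\<lambda>h. h \<in> o(g)"]) auto
  then have "(\<lambda>n. g n - c * f n) \<sim>[sequentially] g"
    by (rule smallo_imp_asymp_equiv)
  then have "g \<in> O(\<lambda>n. g n - c * f n)"
    by (rule asymp_equiv_imp_bigo[OF asymp_equiv_symI])
  with assms have "f \<in> o(\<lambda>n. g n - c * f n)"
    by (rule landau_o.small_big_trans)
  then show ?thesis
    by (rule smalloD_tendsto)
qed

lemma eventually_eq_mult_power_between:
  fixes a b l h :: "nat \<Rightarrow> real" and k :: "nat \<Rightarrow> nat"
  assumes l: "l \<longlonglongrightarrow> 1" and h: "h \<longlonglongrightarrow> 1"
    and between: "\<forall>\<^sub>F n in sequentially. 0 \<le> a n \<and> a n * l n ^ k n \<le> b n \<and> b n \<le> a n * h n ^ k n"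
  shows "\<exists>r. r \<longlonglongrightarrow> 1 \<and> (\<forall>\<^sub>F n in sequentially. b n = a n * r n ^ k n)"
proof -
  \<comment> \<open>the k-th root of b / a lies between l and h\<close>
  define r where "r n = (if 0 < a n \<and> 0 < k n then root (k n) (b n / a n) else l n)" for n
  have "\<forall>\<^sub>F n in sequentially. 0 < l n" "\<forall>\<^sub>F n in sequentially. 0 < h n"
    using order_tendstoD(1)[OF l] order_tendstoD(1)[OF h] by simp_all
  with between have "\<forall>\<^sub>F n in sequentially. l n \<le> r n \<and> r n \<le> max (l n) (h n) \<and> b n = a n * r n ^ k n"
  proof eventually_elim
    case (elim n)
    show ?case
    proof (cases "0 < a n \<and> 0 < k n")
      case True
      then have "l n ^ k n \<le> b n / a n" "b n / a n \<le> h n ^ k n"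
        using elim by (simp_all add: pos_le_divide_eq pos_divide_le_eq mult.commute)
      then have "root (k n) (l n ^ k n) \<le> r n" "r n \<le> root (k n) (h n ^ k n)"
        using True unfolding r_def by (simp_all add: real_root_le_mono)
      moreover have "r n ^ k n = b n / a n"
      proof -
        have "0 \<le> b n / a n"
          using \<open>l n ^ k n \<le> b n / a n\<close> elim by (meson less_imp_le order_trans zero_le_power)
        then show ?thesis
          using True unfolding r_def by (simp add: real_root_pow_pos2)
      qed
      ultimately show ?thesis
        using True elim by (simp add: real_root_power_cancel less_imp_le)
    next
      case False
      then have "b n = a n" if "k n = 0" using elim that by simp
      moreover have "b n = 0" if "a n = 0" using elim that by simp
      ultimately show ?thesis
        using False elim unfolding r_def by force
    qed
  qed
  moreover have "(\<lambda>n. max (l n) (h n)) \<longlonglongrightarrow> 1"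
    using tendsto_max[OF l h] by simp
  ultimately have "r \<longlonglongrightarrow> 1"
    using l by (auto intro: tendsto_sandwich elim: eventually_mono)
  with \<open>\<forall>\<^sub>F n in sequentially. l n \<le> r n \<and> _\<close> show ?thesis
    by (auto elim: eventually_mono)
qed

lemma eventually_eq_mult_one_plus_power:
  fixes a b g \<delta> :: "nat \<Rightarrow> real" and k :: "nat \<Rightarrow> nat"
  assumes "g \<longlonglongrightarrow> 0" "\<delta> \<longlonglongrightarrow> 0"
    and "\<forall>\<^sub>F n in sequentially. 0 \<le> a n \<and> a n / (1 + g n) ^ k n \<le> b n \<and> b n \<le> a n * (1 + \<delta> n) ^ k n"
  shows "\<exists>\<epsilon>. \<epsilon> \<longlonglongrightarrow> 0 \<and> (\<forall>\<^sub>F n in sequentially. b n = a n * (1 + \<epsilon> n) ^ k n)"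
proof -
  have "(\<lambda>n. 1 / (1 + g n)) \<longlonglongrightarrow> 1 / (1 + 0)" "(\<lambda>n. 1 + \<delta> n) \<longlonglongrightarrow> 1 + 0"
    using assms(1,2) by (intro tendsto_intros; simp)+
  moreover have "\<forall>\<^sub>F n in sequentially.
      0 \<le> a n \<and> a n * (1 / (1 + g n)) ^ k n \<le> b n \<and> b n \<le> a n * (1 + \<delta> n) ^ k n"
    using assms(3) by (simp add: power_one_over)
  ultimately obtain r where "r \<longlonglongrightarrow> 1" "\<forall>\<^sub>F n in sequentially. b n = a n * r n ^ k n"
    using eventually_eq_mult_power_between[of "\<lambda>n. 1 / (1 + g n)" "\<lambda>n. 1 + \<delta> n" a k b] by auto
  then show ?thesis
    using tendsto_diff[OF \<open>r \<longlonglongrightarrow> 1\<close> tendsto_const[of 1]]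
    by (intro exI[of _ "\<lambda>n. r n - 1"]) simp
qed

theorem corollary1p5:
  fixes d :: "nat \<Rightarrow> nat \<Rightarrow> nat" and H :: "nat \<Rightarrow> nat set set"
  assumes graphH: "\<And>n. simple_graph n (H n)"
    and graphical: "\<And>n. graphical n (d n)"
    and sorted: "\<And>n. nonincreasing_on n (d n)"
    and hypJ: "(\<lambda>n. real (Jd n (d n))) \<in> o(\<lambda>n. real (Mtot n (d n)) - 2 * real (card (H n)))"
  shows "(\<exists>\<epsilon>::nat \<Rightarrow> real. \<epsilon> \<longlonglongrightarrow> 0 \<and>
            (\<forall>\<^sub>F n in sequentially.
               prob_contains n (d n) (H n)
               \<le> (\<Prod>i=1..n. ffall (real (d n i)) (deg (H n) i)) *
                 (\<Prod>i=1..card (H n). (1 + \<epsilon> n) /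
                     (real (Mtot n (d n)) - 2 * real i + 2))))
       \<and> ((\<lambda>n. real (Delta_set (d n) (boundary (H n))) ^ 2)
              \<in> o(\<lambda>n. real (Mtot n (d n)) - 2 * real (card (H n)))
          \<longrightarrow> (\<exists>\<epsilon>::nat \<Rightarrow> real. \<epsilon> \<longlonglongrightarrow> 0 \<and>
                (\<forall>\<^sub>F n in sequentially.
                   prob_contains n (d n) (H n)
                   = (\<Prod>i=1..n. ffall (real (d n i)) (deg (H n) i)) *
                     (\<Prod>i=1..card (H n). (1 + \<epsilon> n) /
                         (real (Mtot n (d n)) - 2 * real i + 2)))))"
proof -
  define W where "W n = real (Mtot n (d n)) - 2 * real (card (H n))" for n
  define J where "J n = real (Jd n (d n))" for n
  define a where "a n = deg_ffall n (d n) (H n) / ffall2 (real (Mtot n (d n))) (card (H n))" for n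
  define g where "g n = real (Delta_set (d n) (boundary (H n))) ^ 2 / W n + 10 * J n / (W n - 10 * J n)" for n
  define \<delta> where "\<delta> n = 4 * J n / (W n - 4 * J n)" for n
  have rhs: "(\<Prod>i=1..n. ffall (real (d n i)) (deg (H n) i))
      * (\<Prod>i=1..card (H n). c / (real (Mtot n (d n)) - 2 * real i + 2)) = a n * c ^ card (H n)" for n c
    unfolding a_def deg_ffall_def ffall2_def by (simp add: prod_dividef)
  have between: "\<forall>\<^sub>F n in sequentially. 0 \<le> a n \<and> a n / (1 + g n) ^ card (H n) \<le> prob_contains n (d n) (H n)
      \<and> prob_contains n (d n) (H n) \<le> a n * (1 + \<delta> n) ^ card (H n)"
    using landau_o.smallD[OF hypJ, of "1 / 20", simplified]
    by eventually_elim
      (use prob_contains_between[OF graphical sorted graphH] deg_ffall_div_ffall2_nonneg[OF graphH]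
        in \<open>simp add: a_def g_def \<delta>_def J_def W_def add.assoc mult.commute\<close>)
  have "\<delta> \<longlonglongrightarrow> 0"
    using tendsto_mult_right_zero[OF smallo_div_shift_tendsto_zero[OF hypJ, of 4], of 4]
    unfolding \<delta>_def J_def W_def by simp
  show ?thesis
    unfolding rhs
  proof (intro conjI impI)
    show "\<exists>\<epsilon>. \<epsilon> \<longlonglongrightarrow> 0 \<and> (\<forall>\<^sub>F n in sequentially. prob_contains n (d n) (H n) \<le> a n * (1 + \<epsilon> n) ^ card (H n))"
      using \<open>\<delta> \<longlonglongrightarrow> 0\<close> between by (auto elim: eventually_mono)
  next
    assume "(\<lambda>n. real (Delta_set (d n) (boundary (H n))) ^ 2)
      \<in> o(\<lambda>n. real (Mtot n (d n)) - 2 * real (card (H n)))"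
    then have "g \<longlonglongrightarrow> 0"
      using tendsto_add[OF smalloD_tendsto tendsto_mult_right_zero[OF smallo_div_shift_tendsto_zero[OF hypJ, of 10], of 10]]
      unfolding g_def J_def W_def by simp
    then show "\<exists>\<epsilon>. \<epsilon> \<longlonglongrightarrow> 0 \<and> (\<forall>\<^sub>F n in sequentially. prob_contains n (d n) (H n) = a n * (1 + \<epsilon> n) ^ card (H n))"
      using \<open>\<delta> \<longlonglongrightarrow> 0\<close> between by (rule eventually_eq_mult_one_plus_power)
  qed
qed

end
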